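(* Let $(X_n,\eta_n)$ be a time-homogeneous Markov chain on a locally finite set $\Sigma\subseteq\mathbb{R}_+\times S$ ($S$ finite). Suppose that for some $p>2$ there is $C_p<\infty$ with $\mathbb{E}_{x,i}[|X_{n+1}-X_n|^p]\le C_p$ for all $(x,i)\in\Sigma$; that there exist $c_i\in\mathbb{R}$, $s_i^2\ge0$ (at least one $s_i^2\ne0$) with $\mu_i(x)=c_i/x+o(x^{-1})$ and $\sigma_i^2(x)=s_i^2+o(1)$ as $x\to\infty$; and that $q_{ij}(x)\to q_{ij}$ as $x\to\infty$ for all $i,j$, with $(q_{ij})$ an irreducible stochastic matrix. Let $\zeta\in(\frac1{p-1},1)$ and $E_n=\{|X_{n+1}-X_n|\le X_n^\zeta\}$. Let $b_i\in\mathbb{R}$, $i\in S$, and for $r\in\mathbb{R}$ let $f_r$ be as in the context. Then for any $r\in\mathbb{R}$, as $x\to\infty$, \[\mathbb{E}_{x,i}[(f_r(X_{n+1},\eta_{n+1})-f_r(X_n,\eta_n))\mathbf 1(E_n)]=\frac r2x^{r-2}\Big(2c_i+(r-1)s_i^2+\sum_{j\in S}(b_j-b_i)q_{ij}+o(1)\Big).\]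
   Context: $\mathbb{E}_{x,i}[\cdot]=\mathbb{E}[\cdot\mid X_n=x,\eta_n=i]$; $q_{ij}(x)=\Pr[\eta_{n+1}=j\mid X_n=x,\eta_n=i]$; $\mu_i(x)=\mathbb{E}_{x,i}[X_{n+1}-X_n]$; $\sigma_i^2(x)=\mathbb{E}_{x,i}[(X_{n+1}-X_n)^2]$. For $r\in\mathbb{R}$, $x_0:=1+\sqrt{|r|\max_i|b_i|}$ and $f_r(x,i)=x^r+\frac r2b_ix^{r-2}$ for $x\ge x_0$, $f_r(x,i)=x_0^r+\frac r2b_ix_0^{r-2}$ for $x<x_0$. *)

theory Defs
  imports "HOL-Probability.Probability"
begin

fun mat_pow :: "('s::finite \<Rightarrow> 's \<Rightarrow> real) \<Rightarrow> nat \<Rightarrow> 's \<Rightarrow> 's \<Rightarrow> real" where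
  "mat_pow q 0 i j = (if i = j then 1 else 0)"
| "mat_pow q (Suc n) i j = (\<Sum>k\<in>UNIV. mat_pow q n i k * q k j)"

definition stochastic_matrix :: "('s::finite \<Rightarrow> 's \<Rightarrow> real) \<Rightarrow> bool" where
  "stochastic_matrix q \<longleftrightarrow> (\<forall>i j. q i j \<ge> 0) \<and> (\<forall>i. (\<Sum>j\<in>UNIV. q i j) = 1)"

definition irreducible_matrix :: "('s::finite \<Rightarrow> 's \<Rightarrow> real) \<Rightarrow> bool" where
  "irreducible_matrix q \<longleftrightarrow> (\<forall>i j. \<exists>n. mat_pow q n i j > 0)"

definition locally_finite_state_space :: "(real \<times> 's::finite) set \<Rightarrow> bool" where
  "locally_finite_state_space \<Sigma> \<longleftrightarrow>
     (\<forall>z\<in>\<Sigma>. fst z \<ge> 0) \<and> (\<forall>B. finite {z\<in>\<Sigma>. fst z \<le> B})"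

definition at_top_in :: "(real \<times> 's) set \<Rightarrow> 's \<Rightarrow> real filter" where
  "at_top_in \<Sigma> i = at_top \<sqinter> principal {x. (x, i) \<in> \<Sigma>}"

definition x0_of :: "real \<Rightarrow> ('s::finite \<Rightarrow> real) \<Rightarrow> real" where
  "x0_of r b = 1 + sqrt (\<bar>r\<bar> * Max (range (\<lambda>i. \<bar>b i\<bar>)))"

definition f_r :: "('s::finite \<Rightarrow> real) \<Rightarrow> real \<Rightarrow> real \<Rightarrow> 's \<Rightarrow> real" where
  "f_r b r x i =
     (if x \<ge> x0_of r b then x powr r + r / 2 * b i * x powr (r - 2)
      else x0_of r b powr r + r / 2 * b i * x0_of r b powr (r - 2))"

end

theory Submission
  imports Defs
begin

text \<open>
  On the window \<bar>\<Delta>\<bar> \<le> x^\<zeta> (\<zeta> < 1) the jump \<Delta> = X_{n+1} - X_n is o(x), so Taylor expansion of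
  y^r + r/2 b_j y^(r-2) around x gives
    x^(2-r) (f_r(y,j) - f_r(x,i)) = r x \<Delta> + r(r-1)/2 \<Delta>^2 + r/2 (b_j - b_i) + O(x^(\<zeta>-1) (\<Delta>^2 + 1)),
  and the error has vanishing expectation because the second moment stays bounded.
  By the p-th moment bound, truncating \<Delta>^k at the window changes its expectation by O(x^(-\<zeta>(p-k))),
  so the truncated drift, variance and jump terms keep the limits c_i, s_i^2 and \<Sum>_j (b_j - b_i) q_ij.
  The drift lives on scale 1/x, and this is exactly where \<zeta>(p-1) > 1 is needed.
\<close>

lemma powr_le_two_powr_abs:
  fixes u e :: real
  assumes "1/2 \<le> u" "u \<le> 2"
  shows "u powr e \<le> 2 powr \<bar>e\<bar>"
proof (cases "e \<ge> 0")
  case True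
  then show ?thesis using assms by (simp add: powr_mono2)
next
  case False
  have "u powr e = inverse u powr (-e)"
    using assms by (simp add: inverse_eq_divide powr_divide powr_minus_divide)
  also have "\<dots> \<le> 2 powr (-e)"
    by (rule powr_mono2) (use False assms in \<open>auto simp: field_simps\<close>)
  finally show ?thesis using False by simp
qed

lemma one_plus_powr_taylor_bound:
  fixes a :: real and n :: nat
  obtains K where "K \<ge> 0" and "\<And>t. \<bar>t\<bar> \<le> 1/2 \<Longrightarrow>
     \<bar>(1 + t) powr a - (\<Sum>m<n. (\<Prod>k<m. a - real k) / fact m * t ^ m)\<bar> \<le> K * \<bar>t\<bar> ^ n"
proof
  define d where "d m t = (\<Prod>k<m. a - real k) * (1 + t) powr (a - real m)" for m t
  define K where "K = \<bar>\<Prod>k<n. a - real k\<bar> * 2 powr \<bar>a - real n\<bar> / fact n"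
  show "K \<ge> 0" by (simp add: K_def)
  fix t :: real assume t: "\<bar>t\<bar> \<le> 1/2"
  have "DERIV (d m) s :> d (Suc m) s" if "\<bar>s\<bar> \<le> \<bar>t\<bar>" for m s
  proof -
    have "1 + s > 0" using that t by auto
    then have "DERIV (d m) s :> (\<Prod>k<m. a - real k) * ((a - real m) * (1 + s) powr (a - real m - 1))"
      unfolding d_def by (auto intro!: derivative_eq_intros)
    then show ?thesis by (simp add: d_def algebra_simps diff_diff_add)
  qed
  then obtain s where s: "\<bar>s\<bar> \<le> \<bar>t\<bar>"
    and taylor: "d 0 t = (\<Sum>m<n. d m 0 / fact m * t ^ m) + d n s / fact n * t ^ n"
    using Maclaurin_bi_le[of d "d 0" n t] by blast
  have "(1 + s) powr (a - real n) \<le> 2 powr \<bar>a - real n\<bar>"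
    by (rule powr_le_two_powr_abs) (use s t in auto)
  then have "\<bar>d n s / fact n * t ^ n\<bar> \<le> K * \<bar>t\<bar> ^ n"
    by (auto simp: d_def K_def abs_mult power_abs intro!: mult_right_mono divide_right_mono mult_left_mono)
  then show "\<bar>(1 + t) powr a - (\<Sum>m<n. (\<Prod>k<m. a - real k) / fact m * t ^ m)\<bar> \<le> K * \<bar>t\<bar> ^ n"
    using taylor by (simp add: d_def)
qed

lemma powr_increment_expansion:
  fixes r :: real
  obtains C where "C \<ge> 0" and "\<And>x y bi bj w. x > 0 \<Longrightarrow> \<bar>y - x\<bar> \<le> x / 2 \<Longrightarrow> \<bar>y - x\<bar> \<le> x * w \<Longrightarrow>
      \<bar>x powr (2 - r) * ((y powr r + r / 2 * bj * y powr (r - 2)) - (x powr r + r / 2 * bi * x powr (r - 2)))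
        - (r * x * (y - x) + r * (r - 1) / 2 * (y - x)\<^sup>2 + r / 2 * (bj - bi))\<bar>
      \<le> C * w * ((y - x)\<^sup>2 + \<bar>bj\<bar>)"
proof -
  obtain K1 where K1: "K1 \<ge> 0" "\<And>t. \<bar>t\<bar> \<le> 1/2 \<Longrightarrow> \<bar>(1 + t) powr (r - 2) - 1\<bar> \<le> K1 * \<bar>t\<bar>"
    using one_plus_powr_taylor_bound[of "r - 2" 1] by auto
  have quadratic: "(\<Sum>m<3. (\<Prod>k<m. r - real k) / fact m * t ^ m) = 1 + r * t + r * (r - 1) / 2 * t\<^sup>2" for t
    by (simp add: numeral_3_eq_3 numeral_2_eq_2 fact_numeral algebra_simps)
  obtain K3 where K3: "K3 \<ge> 0"
    "\<And>t. \<bar>t\<bar> \<le> 1/2 \<Longrightarrow> \<bar>(1 + t) powr r - 1 - r * t - r * (r - 1) / 2 * t\<^sup>2\<bar> \<le> K3 * \<bar>t\<bar> ^ 3"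
    using one_plus_powr_taylor_bound[of r 3] unfolding quadratic by (auto simp: algebra_simps)
  show ?thesis
  proof (rule that[of "K3 + \<bar>r\<bar> / 2 * K1"])
    show "K3 + \<bar>r\<bar> / 2 * K1 \<ge> 0" using K1 K3 by simp
    fix x y bi bj w :: real
    assume x: "x > 0" and half: "\<bar>y - x\<bar> \<le> x / 2" and small: "\<bar>y - x\<bar> \<le> x * w"
    define t where "t = (y - x) / x"
    have y: "y = x * (1 + t)" and dy: "y - x = x * t" using x by (simp_all add: t_def field_simps)
    have t_half: "\<bar>t\<bar> \<le> 1/2" and t_w: "\<bar>t\<bar> \<le> w"
      using x half small by (simp_all add: t_def abs_divide field_simps)
    have y_powr: "y powr e = x powr e * (1 + t) powr e" for e
      using x t_half unfolding y by (simp add: powr_mult)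
    define R1 where "R1 = (1 + t) powr (r - 2) - 1"
    define R3 where "R3 = (1 + t) powr r - 1 - r * t - r * (r - 1) / 2 * t\<^sup>2"
    have cancel: "x powr (2 - r) * x powr r = x\<^sup>2" "x powr (2 - r) * x powr (r - 2) = 1"
      using x by (simp_all flip: powr_add)
    have "x powr (2 - r) * ((y powr r + r / 2 * bj * y powr (r - 2)) - (x powr r + r / 2 * bi * x powr (r - 2)))
        - (r * x * (y - x) + r * (r - 1) / 2 * (y - x)\<^sup>2 + r / 2 * (bj - bi))
      = (x powr (2 - r) * x powr r) * ((1 + t) powr r - 1)
        + r / 2 * bj * (x powr (2 - r) * x powr (r - 2)) * (1 + t) powr (r - 2)
        - r / 2 * bi * (x powr (2 - r) * x powr (r - 2))
        - (r * x * (x * t) + r * (r - 1) / 2 * (x * t)\<^sup>2 + r / 2 * (bj - bi))"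
      unfolding y_powr dy by (simp add: algebra_simps)
    also have "\<dots> = x\<^sup>2 * R3 + r / 2 * bj * R1"
      unfolding cancel R1_def R3_def by (simp add: field_simps power2_eq_square)
    finally have identity: "x powr (2 - r) * ((y powr r + r / 2 * bj * y powr (r - 2)) - (x powr r + r / 2 * bi * x powr (r - 2)))
        - (r * x * (y - x) + r * (r - 1) / 2 * (y - x)\<^sup>2 + r / 2 * (bj - bi)) = x\<^sup>2 * R3 + r / 2 * bj * R1" .
    have "\<bar>x\<^sup>2 * R3\<bar> \<le> x\<^sup>2 * (K3 * \<bar>t\<bar> ^ 3)"
      unfolding abs_mult using K3(2)[OF t_half] by (simp add: R3_def mult_left_mono)
    also have "\<dots> = K3 * \<bar>t\<bar> * (y - x)\<^sup>2"
      unfolding dy by (simp add: power2_eq_square power3_eq_cube abs_mult_self_eq algebra_simps)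
    also have "\<dots> \<le> K3 * w * (y - x)\<^sup>2"
      using K3(1) t_w by (intro mult_right_mono mult_left_mono) auto
    finally have cubic_part: "\<bar>x\<^sup>2 * R3\<bar> \<le> K3 * w * (y - x)\<^sup>2" .
    have "\<bar>r / 2 * bj * R1\<bar> \<le> \<bar>r\<bar> / 2 * \<bar>bj\<bar> * (K1 * \<bar>t\<bar>)"
      unfolding abs_mult using K1(2)[OF t_half] by (simp add: R1_def mult_left_mono)
    also have "\<dots> \<le> \<bar>r\<bar> / 2 * K1 * w * \<bar>bj\<bar>"
      using mult_left_mono[OF t_w, of "\<bar>r\<bar> / 2 * \<bar>bj\<bar> * K1"] K1(1) by (simp add: algebra_simps)
    finally have linear_part: "\<bar>r / 2 * bj * R1\<bar> \<le> \<bar>r\<bar> / 2 * K1 * w * \<bar>bj\<bar>" .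
    have "w \<ge> 0" using x order_trans[OF abs_ge_zero small] by (simp add: zero_le_mult_iff)
    then have "K3 * w * \<bar>bj\<bar> \<ge> 0" "\<bar>r\<bar> / 2 * K1 * w * (y - x)\<^sup>2 \<ge> 0"
      using K1(1) K3(1) by simp_all
    moreover have "(K3 + \<bar>r\<bar> / 2 * K1) * w * ((y - x)\<^sup>2 + \<bar>bj\<bar>)
        = K3 * w * (y - x)\<^sup>2 + \<bar>r\<bar> / 2 * K1 * w * \<bar>bj\<bar>
          + (K3 * w * \<bar>bj\<bar> + \<bar>r\<bar> / 2 * K1 * w * (y - x)\<^sup>2)"
      by (simp add: algebra_simps)
    ultimately show "\<bar>x powr (2 - r) * ((y powr r + r / 2 * bj * y powr (r - 2)) - (x powr r + r / 2 * bi * x powr (r - 2)))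
        - (r * x * (y - x) + r * (r - 1) / 2 * (y - x)\<^sup>2 + r / 2 * (bj - bi))\<bar>
      \<le> (K3 + \<bar>r\<bar> / 2 * K1) * w * ((y - x)\<^sup>2 + \<bar>bj\<bar>)"
      unfolding identity using cubic_part linear_part abs_triangle_ineq[of "x\<^sup>2 * R3" "r / 2 * bj * R1"]
      by linarith
  qed
qed

lemma abs_powr_le_one_plus_abs_powr:
  fixes v k p :: real
  assumes "0 \<le> k" "k \<le> p"
  shows "\<bar>v\<bar> powr k \<le> 1 + \<bar>v\<bar> powr p"
proof (cases "\<bar>v\<bar> \<le> 1")
  case True
  then have "\<bar>v\<bar> powr k \<le> 1" using assms(1) by (simp add: powr_le1)
  then show ?thesis by (simp add: add_increasing2)
next
  case False
  then have "\<bar>v\<bar> powr k \<le> \<bar>v\<bar> powr p" using assms by (intro powr_mono) auto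
  then show ?thesis by simp
qed

lemma integrable_of_abs_powr_moment:
  fixes M :: "'a pmf" and g :: "'a \<Rightarrow> real"
  assumes moment: "integrable M (\<lambda>z. \<bar>g z\<bar> powr p)" and p: "2 \<le> p"
  shows "integrable M g" "integrable M (\<lambda>z. (g z)\<^sup>2)"
proof -
  have dominating: "integrable M (\<lambda>z. 1 + \<bar>g z\<bar> powr p)" using moment by simp
  show "integrable M g"
    by (rule Bochner_Integration.integrable_bound[OF dominating])
      (use abs_powr_le_one_plus_abs_powr[of 1 p] p in \<open>auto intro!: AE_I2\<close>)
  show "integrable M (\<lambda>z. (g z)\<^sup>2)"
    by (rule Bochner_Integration.integrable_bound[OF dominating])
      (use abs_powr_le_one_plus_abs_powr[of 2 p] p in \<open>auto intro!: AE_I2\<close>)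
qed

lemma expectation_abs_diff_le:
  fixes M :: "'a pmf" and f g w :: "'a \<Rightarrow> real"
  assumes g: "integrable M g" and w: "integrable M w" and close: "\<And>z. \<bar>f z - g z\<bar> \<le> w z"
  shows "integrable M f"
    and "\<bar>measure_pmf.expectation M f - measure_pmf.expectation M g\<bar> \<le> measure_pmf.expectation M w"
proof -
  have diff: "integrable M (\<lambda>z. f z - g z)"
    by (rule Bochner_Integration.integrable_bound[OF w])
      (use close in \<open>auto intro!: AE_I2 order_trans[OF _ abs_ge_self]\<close>)
  from Bochner_Integration.integrable_add[OF diff g]
  show f: "integrable M f" by simp
  have "\<bar>measure_pmf.expectation M f - measure_pmf.expectation M g\<bar>
      = \<bar>measure_pmf.expectation M (\<lambda>z. f z - g z)\<bar>"
    using f g by simp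
  also have "\<dots> \<le> measure_pmf.expectation M (\<lambda>z. \<bar>f z - g z\<bar>)"
    using integral_norm_bound[of M "\<lambda>z. f z - g z"] by simp
  also have "\<dots> \<le> measure_pmf.expectation M w"
    by (intro integral_mono integrable_abs[OF diff] w close)
  finally show "\<bar>measure_pmf.expectation M f - measure_pmf.expectation M g\<bar> \<le> measure_pmf.expectation M w" .
qed

lemma truncated_expectation_error_bound:
  fixes M :: "'a pmf" and g u :: "'a \<Rightarrow> real"
  assumes moment: "integrable M (\<lambda>z. \<bar>u z\<bar> powr p)"
    and moment_bound: "measure_pmf.expectation M (\<lambda>z. \<bar>u z\<bar> powr p) \<le> C"
    and g: "integrable M g" and h: "h > 0" and k: "0 \<le> k" "k \<le> p" and B: "B \<ge> 0"
    and tail: "\<And>z. \<bar>u z\<bar> > h \<Longrightarrow> \<bar>g z\<bar> \<le> B * \<bar>u z\<bar> powr k"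
  shows "\<bar>measure_pmf.expectation M (\<lambda>z. g z * indicator {z. \<bar>u z\<bar> \<le> h} z)
          - measure_pmf.expectation M g\<bar> \<le> B * C / h powr (p - k)"
proof -
  define G where "G = (\<lambda>z. B / h powr (p - k) * \<bar>u z\<bar> powr p)"
  have "\<bar>g z * indicator {z. \<bar>u z\<bar> \<le> h} z - g z\<bar> \<le> G z" for z
  proof (cases "\<bar>u z\<bar> \<le> h")
    case True
    then show ?thesis using B by (simp add: G_def)
  next
    case False
    have "h powr (p - k) * \<bar>u z\<bar> powr k \<le> \<bar>u z\<bar> powr (p - k) * \<bar>u z\<bar> powr k"
      by (intro mult_right_mono powr_mono2) (use False h k in auto)
    then have "\<bar>u z\<bar> powr k \<le> \<bar>u z\<bar> powr p / h powr (p - k)"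
      using h by (simp add: field_simps flip: powr_add)
    then have "B * \<bar>u z\<bar> powr k \<le> B * (\<bar>u z\<bar> powr p / h powr (p - k))"
      using B by (rule mult_left_mono)
    then have "B * \<bar>u z\<bar> powr k \<le> G z" by (simp add: G_def)
    then show ?thesis using False tail[of z] by simp
  qed
  then have "\<bar>measure_pmf.expectation M (\<lambda>z. g z * indicator {z. \<bar>u z\<bar> \<le> h} z)
      - measure_pmf.expectation M g\<bar> \<le> measure_pmf.expectation M G"
    by (intro expectation_abs_diff_le(2) g) (simp add: G_def moment)
  also have "\<dots> = B / h powr (p - k) * measure_pmf.expectation M (\<lambda>z. \<bar>u z\<bar> powr p)"
    by (simp add: G_def)
  also have "\<dots> \<le> B / h powr (p - k) * C"
    using B by (intro mult_left_mono moment_bound) simp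
  finally show ?thesis by simp
qed

lemma integrable_fun_snd:
  fixes M :: "('a \<times> 's::finite) pmf" and \<phi> :: "'s \<Rightarrow> real"
  shows "integrable M (\<lambda>z. \<phi> (snd z))"
proof (rule measure_pmf.integrable_const_bound[where B = "\<Sum>j\<in>UNIV. \<bar>\<phi> j\<bar>"])
  have "\<bar>\<phi> j\<bar> \<le> (\<Sum>j\<in>UNIV. \<bar>\<phi> j\<bar>)" for j
    by (rule member_le_sum) auto
  then show "AE z in M. norm (\<phi> (snd z)) \<le> (\<Sum>j\<in>UNIV. \<bar>\<phi> j\<bar>)"
    by simp
qed simp

lemma expectation_fun_snd:
  fixes M :: "('a \<times> 's::finite) pmf" and \<phi> :: "'s \<Rightarrow> real"
  shows "measure_pmf.expectation M (\<lambda>z. \<phi> (snd z))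
      = (\<Sum>j\<in>UNIV. \<phi> j * measure_pmf.prob M {z. snd z = j})"
proof -
  have sum_indicator: "(\<lambda>z. \<phi> (snd z)) = (\<lambda>z. \<Sum>j\<in>UNIV. \<phi> j * indicator {z. snd z = j} z)"
    by (simp add: indicator_def if_distrib sum.delta cong: if_cong)
  show ?thesis unfolding sum_indicator
    by (subst Bochner_Integration.integral_sum) (auto simp: integrable_real_mult_indicator integrable_indicator_iff top.not_eq_extremum[symmetric])
qed

lemma f_r_windowed_increment_expansion:
  fixes b :: "'s::finite \<Rightarrow> real" and r \<zeta> :: real
  obtains K where "K \<ge> 0" and "\<And>x z i. x > 0 \<Longrightarrow> x0_of r b \<le> x / 2 \<Longrightarrow> x powr \<zeta> \<le> x / 2 \<Longrightarrow>
      \<bar>x powr (2 - r) * ((f_r b r (fst z) (snd z) - f_r b r x i) * indicator {z. \<bar>fst z - x\<bar> \<le> x powr \<zeta>} z)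
        - (r * x * (fst z - x) + r * (r - 1) / 2 * (fst z - x)\<^sup>2 + r / 2 * (b (snd z) - b i))
          * indicator {z. \<bar>fst z - x\<bar> \<le> x powr \<zeta>} z\<bar>
      \<le> K * x powr (\<zeta> - 1) * ((fst z - x)\<^sup>2 + (\<Sum>k\<in>UNIV. \<bar>b k\<bar>))"
proof -
  obtain K where K: "K \<ge> 0" and expansion: "\<And>x y bi bj w. x > 0 \<Longrightarrow> \<bar>y - x\<bar> \<le> x / 2 \<Longrightarrow> \<bar>y - x\<bar> \<le> x * w \<Longrightarrow>
      \<bar>x powr (2 - r) * ((y powr r + r / 2 * bj * y powr (r - 2)) - (x powr r + r / 2 * bi * x powr (r - 2)))
        - (r * x * (y - x) + r * (r - 1) / 2 * (y - x)\<^sup>2 + r / 2 * (bj - bi))\<bar>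
      \<le> K * w * ((y - x)\<^sup>2 + \<bar>bj\<bar>)"
    using powr_increment_expansion[of r] by blast
  show ?thesis
  proof (rule that[OF K], goal_cases)
    case (1 x z i)
    show ?case
    proof (cases "\<bar>fst z - x\<bar> \<le> x powr \<zeta>")
      case True
      with 1 have near: "\<bar>fst z - x\<bar> \<le> x / 2" "\<bar>fst z - x\<bar> \<le> x * x powr (\<zeta> - 1)"
        by (simp_all add: powr_mult_base)
      with 1 have "fst z \<ge> x0_of r b" "x \<ge> x0_of r b"
        using abs_le_iff[of "fst z - x" "x / 2"] by linarith+
      with True have "\<bar>x powr (2 - r) * ((f_r b r (fst z) (snd z) - f_r b r x i) * indicator {z. \<bar>fst z - x\<bar> \<le> x powr \<zeta>} z)
          - (r * x * (fst z - x) + r * (r - 1) / 2 * (fst z - x)\<^sup>2 + r / 2 * (b (snd z) - b i))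
            * indicator {z. \<bar>fst z - x\<bar> \<le> x powr \<zeta>} z\<bar>
        \<le> K * x powr (\<zeta> - 1) * ((fst z - x)\<^sup>2 + \<bar>b (snd z)\<bar>)"
        using expansion[OF 1(1) near, of "b (snd z)" "b i"] by (simp add: f_r_def)
      also have "\<dots> \<le> K * x powr (\<zeta> - 1) * ((fst z - x)\<^sup>2 + (\<Sum>k\<in>UNIV. \<bar>b k\<bar>))"
        using K by (intro mult_left_mono add_left_mono member_le_sum) auto
      finally show ?thesis .
    next
      case False
      then show ?thesis using K by simp
    qed
  qed
qed

locale bounded_jump_moments =
  fixes F :: "real filter" and M :: "real \<Rightarrow> (real \<times> 's::finite) pmf" and p C \<zeta> :: real
  assumes F_le_at_top: "F \<le> at_top"
    and p_gt_2: "p > 2"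
    and zeta_gt: "1 / (p - 1) < \<zeta>"
    and zeta_lt_1: "\<zeta> < 1"
    and moment: "\<forall>\<^sub>F x in F. integrable (M x) (\<lambda>z. \<bar>fst z - x\<bar> powr p)
                    \<and> measure_pmf.expectation (M x) (\<lambda>z. \<bar>fst z - x\<bar> powr p) \<le> C"
begin

text \<open>\<open>M x\<close> is the law of the next state from position \<open>x\<close>; \<open>window x\<close> is the event \<open>E\<^sub>n\<close> at \<open>X\<^sub>n = x\<close>.\<close>

abbreviation window :: "real \<Rightarrow> (real \<times> 's) set" where
  "window x \<equiv> {z. \<bar>fst z - x\<bar> \<le> x powr \<zeta>}"

lemma zeta_pos: "\<zeta> > 0"
  using less_trans[OF _ zeta_gt] p_gt_2 by simp

lemma eventually_pos: "\<forall>\<^sub>F x in F. x > 0"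
  using F_le_at_top by (rule filter_leD) (rule eventually_gt_at_top)

lemma tendsto_powr_neg: "a < 0 \<Longrightarrow> ((\<lambda>x. x powr a) \<longlongrightarrow> 0) F"
  using tendsto_neg_powr filterlim_mono[OF filterlim_ident order_refl F_le_at_top] by blast

lemma eventually_displacement_integrable:
  "\<forall>\<^sub>F x in F. integrable (M x) (\<lambda>z. fst z - x) \<and> integrable (M x) (\<lambda>z. (fst z - x)\<^sup>2)"
  using moment by eventually_elim (auto intro!: integrable_of_abs_powr_moment[where p = p] simp: less_imp_le[OF p_gt_2])

lemma truncation_error_tendsto_zero:
  fixes g :: "real \<Rightarrow> real \<times> 's \<Rightarrow> real"
  assumes integrable: "\<forall>\<^sub>F x in F. integrable (M x) (g x)"
    and tail: "\<And>x z. \<bar>fst z - x\<bar> > x powr \<zeta> \<Longrightarrow> \<bar>g x z\<bar> \<le> B * \<bar>fst z - x\<bar> powr k"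
    and k: "0 \<le> k" "k \<le> p" and B: "0 \<le> B" and a: "a < \<zeta> * (p - k)"
  shows "((\<lambda>x. x powr a * (measure_pmf.expectation (M x) (\<lambda>z. g x z * indicator (window x) z)
                            - measure_pmf.expectation (M x) (g x))) \<longlongrightarrow> 0) F"
proof (rule Lim_null_comparison)
  show "((\<lambda>x. B * C * x powr (a - \<zeta> * (p - k))) \<longlongrightarrow> 0) F"
    using tendsto_mult_right_zero[OF tendsto_powr_neg] a by simp
  show "\<forall>\<^sub>F x in F. norm (x powr a * (measure_pmf.expectation (M x) (\<lambda>z. g x z * indicator (window x) z)
                            - measure_pmf.expectation (M x) (g x))) \<le> B * C * x powr (a - \<zeta> * (p - k))"
    using moment integrable eventually_pos
  proof eventually_elim
    case (elim x)
    have "\<bar>measure_pmf.expectation (M x) (\<lambda>z. g x z * indicator (window x) z)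
          - measure_pmf.expectation (M x) (g x)\<bar> \<le> B * C / (x powr \<zeta>) powr (p - k)"
      by (rule truncated_expectation_error_bound) (use elim tail k B in auto)
    then have "x powr a * \<bar>measure_pmf.expectation (M x) (\<lambda>z. g x z * indicator (window x) z)
          - measure_pmf.expectation (M x) (g x)\<bar> \<le> x powr a * (B * C / (x powr \<zeta>) powr (p - k))"
      by (rule mult_left_mono) simp
    also have "\<dots> = B * C * x powr (a - \<zeta> * (p - k))"
      by (simp only: powr_powr powr_diff[of x a "\<zeta> * (p - k)"]) (metis mult.commute times_divide_eq_right)
    finally show ?case by (simp add: abs_mult)
  qed
qed

lemma truncated_drift_tendsto:
  assumes "((\<lambda>x. x * measure_pmf.expectation (M x) (\<lambda>z. fst z - x) - c) \<longlongrightarrow> 0) F"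
  shows "((\<lambda>x. x * measure_pmf.expectation (M x) (\<lambda>z. (fst z - x) * indicator (window x) z)) \<longlongrightarrow> c) F"
proof -
  have "1 < \<zeta> * (p - 1)"
    using zeta_gt p_gt_2 by (simp add: field_simps)
  then have "((\<lambda>x. x powr 1 * (measure_pmf.expectation (M x) (\<lambda>z. (fst z - x) * indicator (window x) z)
                           - measure_pmf.expectation (M x) (\<lambda>z. fst z - x))) \<longlongrightarrow> 0) F"
    using eventually_displacement_integrable p_gt_2
    by (intro truncation_error_tendsto_zero[where B = 1 and k = 1]) (auto elim: eventually_mono)
  from tendsto_add[OF tendsto_add[OF this assms] tendsto_const[of c]]
  have "((\<lambda>x. \<bar>x\<bar> * (measure_pmf.expectation (M x) (\<lambda>z. (fst z - x) * indicator (window x) z)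
                      - measure_pmf.expectation (M x) (\<lambda>z. fst z - x))
              + (x * measure_pmf.expectation (M x) (\<lambda>z. fst z - x) - c) + c) \<longlongrightarrow> c) F"
    by simp
  then show ?thesis
    by (rule Lim_transform_eventually) (use eventually_pos in \<open>auto elim: eventually_mono simp: algebra_simps\<close>)
qed

lemma truncated_variance_tendsto:
  assumes "((\<lambda>x. measure_pmf.expectation (M x) (\<lambda>z. (fst z - x)\<^sup>2)) \<longlongrightarrow> s) F"
  shows "((\<lambda>x. measure_pmf.expectation (M x) (\<lambda>z. (fst z - x)\<^sup>2 * indicator (window x) z)) \<longlongrightarrow> s) F"
proof -
  have "((\<lambda>x. x powr 0 * (measure_pmf.expectation (M x) (\<lambda>z. (fst z - x)\<^sup>2 * indicator (window x) z)
                           - measure_pmf.expectation (M x) (\<lambda>z. (fst z - x)\<^sup>2))) \<longlongrightarrow> 0) F"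
    using eventually_displacement_integrable p_gt_2 zeta_pos
    by (intro truncation_error_tendsto_zero[where B = 1 and k = 2]) (auto elim: eventually_mono)
  from tendsto_add[OF this assms]
  have "((\<lambda>x. x powr 0 * (measure_pmf.expectation (M x) (\<lambda>z. (fst z - x)\<^sup>2 * indicator (window x) z)
                           - measure_pmf.expectation (M x) (\<lambda>z. (fst z - x)\<^sup>2))
              + measure_pmf.expectation (M x) (\<lambda>z. (fst z - x)\<^sup>2)) \<longlongrightarrow> s) F"
    by simp
  then show ?thesis
    by (rule Lim_transform_eventually) (use eventually_pos in \<open>eventually_elim, simp\<close>)
qed

lemma truncated_jump_tendsto:
  fixes \<phi> q :: "'s \<Rightarrow> real"
  assumes "\<And>j. ((\<lambda>x. measure_pmf.prob (M x) {z. snd z = j}) \<longlongrightarrow> q j) F"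
  shows "((\<lambda>x. measure_pmf.expectation (M x) (\<lambda>z. \<phi> (snd z) * indicator (window x) z))
            \<longlongrightarrow> (\<Sum>j\<in>UNIV. \<phi> j * q j)) F"
proof -
  define B where "B = (\<Sum>j\<in>UNIV. \<bar>\<phi> j\<bar>)"
  have "B \<ge> 0" by (simp add: B_def sum_nonneg)
  have bounded: "\<bar>\<phi> j\<bar> \<le> B" for j
    unfolding B_def by (rule member_le_sum) auto
  have tail: "\<bar>\<phi> (snd z)\<bar> \<le> B * \<bar>fst z - x\<bar> powr 0" if "\<bar>fst z - x\<bar> > x powr \<zeta>" for x z
    using that bounded[of "snd z"] powr_ge_zero[of x \<zeta>] by auto
  have error: "((\<lambda>x. x powr 0 * (measure_pmf.expectation (M x) (\<lambda>z. \<phi> (snd z) * indicator (window x) z)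
                           - measure_pmf.expectation (M x) (\<lambda>z. \<phi> (snd z)))) \<longlongrightarrow> 0) F"
    using \<open>B \<ge> 0\<close> p_gt_2 zeta_pos
    by (intro truncation_error_tendsto_zero[where B = B and k = 0] tail) (simp_all add: integrable_fun_snd)
  have untruncated: "((\<lambda>x. measure_pmf.expectation (M x) (\<lambda>z. \<phi> (snd z))) \<longlongrightarrow> (\<Sum>j\<in>UNIV. \<phi> j * q j)) F"
    unfolding expectation_fun_snd by (intro tendsto_sum tendsto_mult_left assms)
  from tendsto_add[OF error untruncated, unfolded add_0_left] show ?thesis
    by (rule Lim_transform_eventually) (use eventually_pos in \<open>eventually_elim, simp\<close>)
qed

lemma eventually_window_le_half: "\<forall>\<^sub>F x in F. x powr \<zeta> \<le> x / 2"
proof -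
  have "\<forall>\<^sub>F x in F. x powr (\<zeta> - 1) < 1 / 2"
    using order_tendstoD(2)[OF tendsto_powr_neg, of "\<zeta> - 1" "1 / 2"] zeta_lt_1 by simp
  then show ?thesis using eventually_pos
  proof eventually_elim
    case (elim x)
    then have "x powr \<zeta> = x * x powr (\<zeta> - 1)" by (simp add: powr_mult_base)
    also have "\<dots> \<le> x / 2" using elim by simp
    finally show ?case .
  qed
qed

lemma truncated_increment_expansion:
  fixes b :: "'s \<Rightarrow> real" and r s :: real and i :: 's
  assumes variance: "((\<lambda>x. measure_pmf.expectation (M x) (\<lambda>z. (fst z - x)\<^sup>2)) \<longlongrightarrow> s) F"
  shows "((\<lambda>x. x powr (2 - r) * measure_pmf.expectation (M x)
                  (\<lambda>z. (f_r b r (fst z) (snd z) - f_r b r x i) * indicator (window x) z)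
              - (r * (x * measure_pmf.expectation (M x) (\<lambda>z. (fst z - x) * indicator (window x) z))
                 + r * (r - 1) / 2 * measure_pmf.expectation (M x) (\<lambda>z. (fst z - x)\<^sup>2 * indicator (window x) z)
                 + r / 2 * measure_pmf.expectation (M x) (\<lambda>z. (b (snd z) - b i) * indicator (window x) z)))
          \<longlongrightarrow> 0) F"
    (is "((\<lambda>x. ?lhs x - ?main x) \<longlongrightarrow> 0) F")
proof -
  obtain K where K: "K \<ge> 0" and expansion: "\<And>x z i. x > 0 \<Longrightarrow> x0_of r b \<le> x / 2 \<Longrightarrow> x powr \<zeta> \<le> x / 2 \<Longrightarrow>
      \<bar>x powr (2 - r) * ((f_r b r (fst z) (snd z) - f_r b r x i) * indicator (window x) z)
        - (r * x * (fst z - x) + r * (r - 1) / 2 * (fst z - x)\<^sup>2 + r / 2 * (b (snd z) - b i)) * indicator (window x) z\<bar>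
      \<le> K * x powr (\<zeta> - 1) * ((fst z - x)\<^sup>2 + (\<Sum>k\<in>UNIV. \<bar>b k\<bar>))"
    using f_r_windowed_increment_expansion by blast
  define w where "w x = x powr (\<zeta> - 1)" for x
  have "\<forall>\<^sub>F x in F. norm (?lhs x - ?main x) \<le> K * w x * (measure_pmf.expectation (M x) (\<lambda>z. (fst z - x)\<^sup>2) + (\<Sum>k\<in>UNIV. \<bar>b k\<bar>))"
    using eventually_pos eventually_window_le_half eventually_displacement_integrable
      filter_leD[OF F_le_at_top eventually_ge_at_top[of "2 * x0_of r b"]]
  proof eventually_elim
    case (elim x)
    define D where "D z = x powr (2 - r) * ((f_r b r (fst z) (snd z) - f_r b r x i) * indicator (window x) z)" for z
    define T where "T z = r * x * ((fst z - x) * indicator (window x) z)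
      + r * (r - 1) / 2 * ((fst z - x)\<^sup>2 * indicator (window x) z) + r / 2 * ((b (snd z) - b i) * indicator (window x) z)"
      for z :: "real \<times> 's"
    define E where "E z = K * w x * ((fst z - x)\<^sup>2 + (\<Sum>k\<in>UNIV. \<bar>b k\<bar>))" for z :: "real \<times> 's"
    have ind: "integrable (M x) (\<lambda>z. (fst z - x) * indicator (window x) z)"
      "integrable (M x) (\<lambda>z. (fst z - x)\<^sup>2 * indicator (window x) z)"
      "integrable (M x) (\<lambda>z. (b (snd z) - b i) * indicator (window x) z)"
      using elim integrable_fun_snd[of _ "\<lambda>j. b j - b i"] by (auto intro!: integrable_real_mult_indicator)
    have "\<bar>D z - T z\<bar> \<le> E z" for z
      using expansion[of x z i] elim by (simp add: D_def T_def E_def w_def algebra_simps)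
    then have "\<bar>measure_pmf.expectation (M x) D - measure_pmf.expectation (M x) T\<bar>
        \<le> measure_pmf.expectation (M x) E"
      by (rule expectation_abs_diff_le(2)[rotated 2]) (use elim ind in \<open>simp_all add: T_def E_def[abs_def]\<close>)
    moreover have "measure_pmf.expectation (M x) D = ?lhs x"
      by (simp add: D_def[abs_def])
    moreover have "measure_pmf.expectation (M x) T = ?main x"
      using ind by (simp add: T_def[abs_def])
    moreover have "measure_pmf.expectation (M x) E
        = K * w x * (measure_pmf.expectation (M x) (\<lambda>z. (fst z - x)\<^sup>2) + (\<Sum>k\<in>UNIV. \<bar>b k\<bar>))"
      using elim by (simp add: E_def[abs_def])
    ultimately show ?case by simp
  qed
  moreover have "((\<lambda>x. K * w x * (measure_pmf.expectation (M x) (\<lambda>z. (fst z - x)\<^sup>2) + (\<Sum>k\<in>UNIV. \<bar>b k\<bar>))) \<longlongrightarrow> 0) F"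
    using tendsto_mult[OF tendsto_mult_right_zero[OF tendsto_powr_neg] tendsto_add[OF variance tendsto_const]] zeta_lt_1
    by (simp add: w_def)
  ultimately show ?thesis
    by (rule Lim_null_comparison)
qed

lemma truncated_increment_tendsto:
  fixes b :: "'s \<Rightarrow> real" and r c s :: real and q :: "'s \<Rightarrow> real" and i :: 's
  assumes drift: "((\<lambda>x. x * measure_pmf.expectation (M x) (\<lambda>z. fst z - x) - c) \<longlongrightarrow> 0) F"
    and variance: "((\<lambda>x. measure_pmf.expectation (M x) (\<lambda>z. (fst z - x)\<^sup>2)) \<longlongrightarrow> s) F"
    and jump: "\<And>j. ((\<lambda>x. measure_pmf.prob (M x) {z. snd z = j}) \<longlongrightarrow> q j) F"
  shows "((\<lambda>x. x powr (2 - r) * measure_pmf.expectation (M x)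
                  (\<lambda>z. (f_r b r (fst z) (snd z) - f_r b r x i) * indicator (window x) z))
          \<longlongrightarrow> r / 2 * (2 * c + (r - 1) * s + (\<Sum>j\<in>UNIV. (b j - b i) * q j))) F"
proof -
  have main: "((\<lambda>x. r * (x * measure_pmf.expectation (M x) (\<lambda>z. (fst z - x) * indicator (window x) z))
              + r * (r - 1) / 2 * measure_pmf.expectation (M x) (\<lambda>z. (fst z - x)\<^sup>2 * indicator (window x) z)
              + r / 2 * measure_pmf.expectation (M x) (\<lambda>z. (b (snd z) - b i) * indicator (window x) z))
          \<longlongrightarrow> r * c + r * (r - 1) / 2 * s + r / 2 * (\<Sum>j\<in>UNIV. (b j - b i) * q j)) F"
    by (intro tendsto_add tendsto_mult_left truncated_drift_tendsto truncated_variance_tendsto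
        truncated_jump_tendsto[where \<phi> = "\<lambda>j. b j - b i"] drift variance jump)
  have limit: "r * c + r * (r - 1) / 2 * s + r / 2 * (\<Sum>j\<in>UNIV. (b j - b i) * q j)
      = r / 2 * (2 * c + (r - 1) * s + (\<Sum>j\<in>UNIV. (b j - b i) * q j))"
    by (simp add: field_simps)
  from tendsto_add[OF truncated_increment_expansion[OF variance, where r = r and b = b and i = i] main]
  show ?thesis
    unfolding limit by simp
qed

end

lemma asymptotic_form_of_scaled_tendsto:
  fixes g :: "real \<Rightarrow> real" and F :: "real filter"
  assumes r: "r \<noteq> 0" and pos: "\<forall>\<^sub>F x in F. x > 0"
    and lim: "((\<lambda>x. x powr (2 - r) * g x) \<longlongrightarrow> r / 2 * A) F"
  shows "\<exists>e. (e \<longlongrightarrow> 0) F \<and> (\<forall>\<^sub>F x in F. g x = r / 2 * x powr (r - 2) * (A + e x))"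
proof (intro exI conjI)
  define e where "e x = 2 / r * (x powr (2 - r) * g x) - A" for x
  show "(e \<longlongrightarrow> 0) F"
    unfolding e_def using tendsto_diff[OF tendsto_mult_left[OF lim, of "2 / r"] tendsto_const[of A]] r by simp
  show "\<forall>\<^sub>F x in F. g x = r / 2 * x powr (r - 2) * (A + e x)"
    using pos
  proof eventually_elim
    case (elim x)
    have "r / 2 * x powr (r - 2) * (A + e x) = (x powr (r - 2) * x powr (2 - r)) * g x"
      using r by (simp add: e_def)
    also have "x powr (r - 2) * x powr (2 - r) = 1"
      using elim by (simp flip: powr_add)
    finally show ?case by simp
  qed
qed

theorem lemma3p6:
  fixes \<Sigma> :: "(real \<times> 's::finite) set"
    and K :: "real \<times> 's \<Rightarrow> (real \<times> 's) pmf"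
    and p Cp \<zeta> :: real
    and c s2 b :: "'s \<Rightarrow> real"
    and q :: "'s \<Rightarrow> 's \<Rightarrow> real"
  assumes lf: "locally_finite_state_space \<Sigma>"
    and K_in: "\<And>z. z \<in> \<Sigma> \<Longrightarrow> set_pmf (K z) \<subseteq> \<Sigma>"
    and p_gt: "p > 2"
    and moment_int: "\<And>x i. (x, i) \<in> \<Sigma> \<Longrightarrow>
        integrable (measure_pmf (K (x, i))) (\<lambda>(y, j). \<bar>y - x\<bar> powr p)"
    and moment_bd: "\<And>x i. (x, i) \<in> \<Sigma> \<Longrightarrow>
        measure_pmf.expectation (K (x, i)) (\<lambda>(y, j). \<bar>y - x\<bar> powr p) \<le> Cp"
    and mu: "\<And>i. ((\<lambda>x. x * measure_pmf.expectation (K (x, i)) (\<lambda>(y, j). y - x) - c i)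
                  \<longlongrightarrow> 0) (at_top_in \<Sigma> i)"
    and sigma: "\<And>i. ((\<lambda>x. measure_pmf.expectation (K (x, i)) (\<lambda>(y, j). (y - x)\<^sup>2))
                  \<longlongrightarrow> s2 i) (at_top_in \<Sigma> i)"
    and s2_nonneg: "\<And>i. s2 i \<ge> 0"
    and s2_nz: "\<exists>i. s2 i \<noteq> 0"
    and q_lim: "\<And>i j. ((\<lambda>x. measure_pmf.prob (K (x, i)) {z. snd z = j})
                  \<longlongrightarrow> q i j) (at_top_in \<Sigma> i)"
    and q_stoch: "stochastic_matrix q"
    and q_irr: "irreducible_matrix q"
    and zeta: "1 / (p - 1) < \<zeta>" "\<zeta> < 1"
  shows "\<exists>e. (e \<longlongrightarrow> 0) (at_top_in \<Sigma> i) \<and>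
           (\<forall>\<^sub>F x in at_top_in \<Sigma> i.
              measure_pmf.expectation (K (x, i))
                (\<lambda>(y, j). (f_r b r y j - f_r b r x i) * indicator {z. \<bar>fst z - x\<bar> \<le> x powr \<zeta>} (y, j))
              = r / 2 * x powr (r - 2) *
                (2 * c i + (r - 1) * s2 i + (\<Sum>j\<in>UNIV. (b j - b i) * q i j) + e x))"
proof (cases "r = 0")
  case True
  have "f_r b 0 y j = 1" for y j
    by (simp add: f_r_def x0_of_def)
  with True show ?thesis
    by (intro exI[of _ "\<lambda>_. 0"]) (simp add: case_prod_unfold)
next
  case False
  interpret bounded_jump_moments "at_top_in \<Sigma> i" "\<lambda>x. K (x, i)" p Cp \<zeta>
  proof
    have "\<forall>\<^sub>F x in at_top_in \<Sigma> i. (x, i) \<in> \<Sigma>"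
      by (simp add: at_top_in_def eventually_inf_principal)
    then show "\<forall>\<^sub>F x in at_top_in \<Sigma> i. integrable (K (x, i)) (\<lambda>z. \<bar>fst z - x\<bar> powr p)
        \<and> measure_pmf.expectation (K (x, i)) (\<lambda>z. \<bar>fst z - x\<bar> powr p) \<le> Cp"
      by eventually_elim (use moment_int moment_bd in \<open>simp add: case_prod_unfold\<close>)
  qed (use p_gt zeta in \<open>simp_all add: at_top_in_def\<close>)
  from truncated_increment_tendsto[OF mu[of i, unfolded case_prod_unfold]
      sigma[of i, unfolded case_prod_unfold] q_lim[of i], where r = r and b = b and i = i]
  have "((\<lambda>x. x powr (2 - r) * measure_pmf.expectation (K (x, i))
            (\<lambda>(y, j). (f_r b r y j - f_r b r x i) * indicator {z. \<bar>fst z - x\<bar> \<le> x powr \<zeta>} (y, j)))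
        \<longlongrightarrow> r / 2 * (2 * c i + (r - 1) * s2 i + (\<Sum>j\<in>UNIV. (b j - b i) * q i j))) (at_top_in \<Sigma> i)"
    by (simp add: case_prod_unfold)
  then show ?thesis
    by (rule asymptotic_form_of_scaled_tendsto[OF False eventually_pos])
qed

end
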